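(* Let $\mathbb F$ be any field, $n\ge k>1$, let $\mathcal K\subseteq M_{n\times k}(\mathbb F)$ be a linear variety such that $\det_{n,k}(X)=0$ for all $X\in\mathcal K$, and let $B^*\subseteq[n]\times[k]$ be a cobasis of $\mathcal M(\mathcal K)$. If there exist $1\le i'\le n$ and $1\le j'\le k$ such that $|B^*\cap(\{i'\}\times[k])|=l$ and $B^*\cap([n]\times\{j'\})=\varnothing$, then there exists a linear variety $\mathcal K'\subseteq M_{(n-1)\times(k-1)}(\mathbb F)$ with $\operatorname{codim}(\mathcal K')\le\operatorname{codim}(\mathcal K)-l$ such that $\det_{n-1,k-1}(X')=0$ for all $X'\in\mathcal K'$.
   Context: A linear variety is a nonempty set $\mathbf s+V$ with $V$ a linear subspace (uniquely determined); codimension = ambient dimension minus $\dim V$. Identify $M_{n\times k}(\mathbb F)$ with $\mathbb F^{[n]\times[k]}$. Matroid $\mathcal M(\mathcal K)$ of $\mathcal K=\mathbf s+V\subseteq\mathbb F^E$: matroid on $E$ with rank function $r(S)=\dim\operatorname{span}\{x_e|_V:e\in S\}$, $x_e$ coordinate functionals; cobasis = complement of a basis. Cullis' determinant: $\det_{n,k}(X)=\sum_{c}\operatorname{sgn}(c)\det(X[c|))$, sum over $k$-subsets $c=\{c(1)<\dots<c(k)\}$ of $[n]$, $X[c|)$ the submatrix of rows in $c$, $\operatorname{sgn}(c)=(-1)^{\sum_\alpha(c(\alpha)-\alpha)}$. *)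

theory Defs
  imports "HOL-Analysis.Analysis" "HOL-Combinatorics.Combinatorics" "HOL-Library.Function_Algebras"
begin

text \<open>Matrices in M_{n x k}(F) are identified with F^([n] x [k]): we represent them as
  functions on nat x nat that vanish outside the index set [n] x [k] (indices start at 1).\<close>

definition idx :: "nat \<Rightarrow> nat \<Rightarrow> (nat \<times> nat) set" where
  "idx n k = {1..n} \<times> {1..k}"

definition supported :: "(nat \<times> nat) set \<Rightarrow> ((nat \<times> nat) \<Rightarrow> 'a::zero) set" where
  "supported E = {x. \<forall>e. e \<notin> E \<longrightarrow> x e = 0}"

definition fscale :: "'a::field \<Rightarrow> ('b \<Rightarrow> 'a) \<Rightarrow> ('b \<Rightarrow> 'a)" where
  "fscale c x = (\<lambda>e. c * x e)"

definition linear_variety :: "(nat \<times> nat) set \<Rightarrow> ((nat \<times> nat) \<Rightarrow> 'a::field) set \<Rightarrow> bool" where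
  "linear_variety E K \<longleftrightarrow> (\<exists>s V. s \<in> supported E \<and> module.subspace fscale V \<and>
      V \<subseteq> supported E \<and> K = (\<lambda>v. s + v) ` V)"

text \<open>The (uniquely determined) direction space V of a linear variety K = s + V.\<close>
definition direction :: "('b \<Rightarrow> 'a::field) set \<Rightarrow> ('b \<Rightarrow> 'a) set" where
  "direction K = {x - y | x y. x \<in> K \<and> y \<in> K}"

definition codim :: "(nat \<times> nat) set \<Rightarrow> ((nat \<times> nat) \<Rightarrow> 'a::field) set \<Rightarrow> nat" where
  "codim E K = card E - vector_space.dim fscale (direction K)"

text \<open>Matroid M(K): a set S \<subseteq> E is independent iff the family of restricted coordinate
  functionals (x_e|_V)_{e in S} is linearly independent over V = direction K.\<close>
definition mat_indep :: "((nat \<times> nat) \<Rightarrow> 'a::field) set \<Rightarrow> (nat \<times> nat) set \<Rightarrow> bool" where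
  "mat_indep V S \<longleftrightarrow> (\<forall>c. (\<forall>v\<in>V. (\<Sum>e\<in>S. c e * v e) = 0) \<longrightarrow> (\<forall>e\<in>S. c e = 0))"

definition mat_basis :: "(nat \<times> nat) set \<Rightarrow> ((nat \<times> nat) \<Rightarrow> 'a::field) set \<Rightarrow> (nat \<times> nat) set \<Rightarrow> bool" where
  "mat_basis E V B \<longleftrightarrow> B \<subseteq> E \<and> mat_indep V B \<and> (\<forall>e\<in>E - B. \<not> mat_indep V (insert e B))"

definition mat_cobasis :: "(nat \<times> nat) set \<Rightarrow> ((nat \<times> nat) \<Rightarrow> 'a::field) set \<Rightarrow> (nat \<times> nat) set \<Rightarrow> bool" where
  "mat_cobasis E V C \<longleftrightarrow> (\<exists>B. mat_basis E V B \<and> C = E - B)"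

text \<open>Cullis' determinant det_{n,k}; c(alpha) is the alpha-th smallest element of c.\<close>
definition cullis_det :: "nat \<Rightarrow> nat \<Rightarrow> ((nat \<times> nat) \<Rightarrow> 'a::field) \<Rightarrow> 'a" where
  "cullis_det n k X = (\<Sum>c\<in>{c. c \<subseteq> {1..n} \<and> card c = k}.
     let cs = sorted_list_of_set c in
     (-1) ^ (\<Sum>\<alpha>=1..k. cs ! (\<alpha> - 1) - \<alpha>) *
     (\<Sum>p\<in>{p. p permutes {1..k}}. of_int (sign p) * (\<Prod>\<alpha>=1..k. X (cs ! (\<alpha> - 1), p \<alpha>))))"

end

(*
  Let B be the basis of M(K) complementary to B*, and V the direction of K. Since B* misses
  column j', the whole column lies in B. The coordinates in B are independent functionals on V,
  so V contains vectors with arbitrary prescribed B-coordinates; in particular K contains a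
  matrix P whose column j' is the unit vector e_i', and the directions W of V vanishing on
  column j' keep this property.

  Expanding every minor X[c|) along this unit column gives
  det_{n,k}(X) = (-1)^(i'+j') det_{n-1,k-1}(X') for X in P + W, where X' is X with row i' and
  column j' deleted: minors with i' not in c vanish, the row sets c containing i' correspond to
  the (k-1)-subsets of [n-1], and since sgn(c) = (-1)^(sum c + 1 + ... + k) the signs combine
  to (-1)^(i'+j'). Hence det_{n-1,k-1} vanishes on the linear variety K' = (P + W)'.

  The vectors of V dual to the elements of B outside row i' and column j' lie in W and remain
  independent after the deletion. As [n-1] x [k-1] corresponds to the positions outside row i'
  and column j', which split into these basis elements and B* minus row i', this gives
  codim K' <= |B* - row i'| = |B*| - l = codim K - l.
*)

theory Submission
  imports Defs "Jordan_Normal_Form.Determinant"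
begin

section \<open>Expanding Cullis' determinant along a unit column\<close>

lemma sum_permutes_atLeastAtMost_eq_det:
  fixes M :: "nat \<Rightarrow> nat \<Rightarrow> 'a::comm_ring_1"
  shows "(\<Sum>p\<in>{p. p permutes {1..k}}. of_int (sign p) * (\<Prod>\<alpha>=1..k. M \<alpha> (p \<alpha>))) =
         det (mat k k (\<lambda>(a, b). M (Suc a) (Suc b)))"
proof -
  have Suc_bij: "bij_betw Suc {0..<k} {1..k}"
    by (simp add: bij_betw_def image_Suc_atLeastLessThan atLeastLessThanSuc_atLeastAtMost)
  have pred_bij: "bij_betw (\<lambda>x. x - 1) {1..k} {0..<k}"
    by (rule bij_betw_byWitness[where f' = Suc]) auto
  have prod_shift: "(\<Prod>\<alpha>=1..k. f \<alpha>) = (\<Prod>a=0..<k. f (Suc a))" for f :: "nat \<Rightarrow> 'a"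
    using prod.reindex[of Suc "{0..<k}" f]
    by (simp add: image_Suc_atLeastLessThan atLeastLessThanSuc_atLeastAtMost)
  show ?thesis
    unfolding det_def'[of _ k, OF mat_carrier]
  proof (rule sym, rule sum.reindex_bij_witness[where j = "map_permutation {0..<k} Suc"
                                         and i = "map_permutation {1..k} (\<lambda>x. x - 1)"])
    fix p assume "p \<in> {p. p permutes {0..<k}}"
    then have p: "p permutes {0..<k}" by simp
    show "map_permutation {1..k} (\<lambda>x. x - 1) (map_permutation {0..<k} Suc p) = p"
      by (rule map_permutation_compose_inv[OF Suc_bij p]) simp
    show "map_permutation {0..<k} Suc p \<in> {p. p permutes {1..k}}"
      using map_permutation_permutes[OF Suc_bij p] by simp
    have "(\<Prod>\<alpha>=1..k. M \<alpha> (map_permutation {0..<k} Suc p \<alpha>)) = (\<Prod>a=0..<k. M (Suc a) (Suc (p a)))"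
      unfolding prod_shift by (intro prod.cong refl) (simp add: map_permutation_apply)
    then show "of_int (sign (map_permutation {0..<k} Suc p)) * (\<Prod>\<alpha>=1..k. M \<alpha> (map_permutation {0..<k} Suc p \<alpha>))
      = of_int (sign p) * (\<Prod>a=0..<k. mat k k (\<lambda>(a, b). M (Suc a) (Suc b)) $$ (a, p a))"
      using p by (simp add: sign_map_permutation permutes_in_image)
  next
    fix p assume "p \<in> {p. p permutes {1..k}}"
    then have p: "p permutes {1..k}" by simp
    show "map_permutation {0..<k} Suc (map_permutation {1..k} (\<lambda>x. x - 1) p) = p"
      by (rule map_permutation_compose_inv[OF pred_bij p]) simp
    show "map_permutation {1..k} (\<lambda>x. x - 1) p \<in> {p. p permutes {0..<k}}"
      using map_permutation_permutes[OF pred_bij p] by simp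
  qed
qed

lemma det_unit_column:
  assumes A: "A \<in> carrier_mat k k" and j: "j < k" and q: "q < k"
    and col: "\<And>a. a < k \<Longrightarrow> A $$ (a, j) = (if a = q then 1 else 0)"
  shows "det A = (-1) ^ (q + j) * det (mat_delete A q j)"
proof -
  have "det A = (\<Sum>a<k. (if a = q then 1 else 0) * cofactor A a j)"
    using laplace_expansion_column[OF A j] col by simp
  also have "\<dots> = cofactor A q j"
    using q by (simp add: if_distrib[where f = "\<lambda>x. x * _"] cong: if_cong)
  finally show ?thesis unfolding cofactor_def .
qed

lemma det_zero_column:
  assumes A: "A \<in> carrier_mat k k" and j: "j < k" and col: "\<And>a. a < k \<Longrightarrow> A $$ (a, j) = 0"
  shows "det A = 0"
  using laplace_expansion_column[OF A j] col by simp

lemma sorted_list_of_set_image_strict_mono: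
  assumes "strict_mono f" and "finite A"
  shows "sorted_list_of_set (f ` A) = map f (sorted_list_of_set A)"
proof (rule sorted_list_of_set_unique[THEN iffD1])
  have "sorted_wrt (<) (map f (sorted_list_of_set A))"
    unfolding sorted_wrt_map
    by (rule sorted_wrt_mono_rel[OF _ strict_sorted_list_of_set]) (use assms(1) strict_mono_less in blast)
  moreover have "length (sorted_list_of_set A) = card (f ` A)"
    using assms card_image[OF strict_mono_imp_inj_on[OF assms(1)]] by simp
  ultimately show "sorted_wrt (<) (map f (sorted_list_of_set A)) \<and> set (map f (sorted_list_of_set A)) = f ` A
      \<and> length (map f (sorted_list_of_set A)) = card (f ` A)"
    using assms(2) by simp
qed (use assms(2) in simp)

lemma remove1_nth_eq_take_drop:
  assumes "distinct xs" and "q < length xs"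
  shows "remove1 (xs ! q) xs = take q xs @ drop (Suc q) xs"
proof -
  have "xs ! q \<notin> set (take q xs)"
    using assms by (auto simp: in_set_conv_nth nth_eq_iff_index_eq)
  then show ?thesis
    using id_take_nth_drop[OF assms(2)] by (metis remove1.simps(2) remove1_append)
qed

lemma card_less_nth_sorted:
  fixes xs :: "'a::linorder list"
  assumes "sorted_wrt (<) xs" and "m < length xs"
  shows "card {x \<in> set xs. x < xs ! m} = m"
proof -
  have "{x \<in> set xs. x < xs ! m} = set (take m xs)"
  proof (intro Set.set_eqI iffI)
    fix x assume "x \<in> {x \<in> set xs. x < xs ! m}"
    then obtain a where "a < length xs" "x = xs ! a" "xs ! a < xs ! m"
      by (auto simp: in_set_conv_nth)
    moreover have "a < m"
      using sorted_wrt_nth_less[OF assms(1), of m a] calculation assms(2) by (cases rule: linorder_cases[of a m]) auto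
    ultimately show "x \<in> set (take m xs)" by (auto simp: in_set_conv_nth)
  next
    fix x assume "x \<in> set (take m xs)"
    then obtain a where "a < m" "x = xs ! a"
      using assms(2) by (auto simp: in_set_conv_nth)
    then show "x \<in> {x \<in> set xs. x < xs ! m}"
      using assms sorted_wrt_nth_less[OF assms(1)] by auto
  qed
  then show ?thesis
    using assms distinct_card[of "take m xs"] strict_sorted_iff[of xs] by (simp add: distinct_take)
qed

lemma sorted_list_of_set_nth_ge:
  assumes "finite c" and "0 \<notin> c" and "m < card c"
  shows "Suc m \<le> sorted_list_of_set c ! m"
  using assms(3)
proof (induction m)
  case 0
  then show ?case using assms nth_mem[of 0 "sorted_list_of_set c"]
    by (cases "sorted_list_of_set c ! 0") auto
next
  case (Suc m)
  then show ?case
    using sorted_wrt_nth_less[OF strict_sorted_list_of_set, of m "Suc m" c] by simp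
qed

lemma neg_one_power_add_double: "(-1::'a::ring_1) ^ (a + 2 * b) = (-1) ^ a"
  by (simp add: power_add power_mult)

text \<open>The minor \<open>X[c|)\<close> as a matrix with the 0-based indices of \<open>Matrix.mat\<close>.\<close>

definition row_submatrix :: "nat \<Rightarrow> (nat \<times> nat \<Rightarrow> 'a) \<Rightarrow> nat set \<Rightarrow> 'a mat" where
  "row_submatrix k X c = mat k k (\<lambda>(a, b). X (sorted_list_of_set c ! a, Suc b))"

lemma cullis_sign_eq:
  assumes c: "c \<subseteq> {1..n}" "card c = k"
  shows "(-1::'a::ring_1) ^ (\<Sum>\<alpha>=1..k. sorted_list_of_set c ! (\<alpha> - 1) - \<alpha>) = (-1) ^ (\<Sum>c + \<Sum>{1..k})"
proof -
  let ?cs = "sorted_list_of_set c"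
  have fin: "finite c" using c(1) finite_subset by blast
  have "0 \<notin> c" using c(1) by auto
  then have ge: "\<alpha> \<le> ?cs ! (\<alpha> - 1)" if "\<alpha> \<in> {1..k}" for \<alpha>
    using sorted_list_of_set_nth_ge[OF fin, of "\<alpha> - 1"] that c(2) by auto
  have "(\<Sum>\<alpha>=1..k. ?cs ! (\<alpha> - 1)) = (\<Sum>m=0..<k. ?cs ! m)"
    by (rule sum.reindex_bij_witness[where i = Suc and j = "\<lambda>\<alpha>. \<alpha> - 1"]) auto
  also have "\<dots> = \<Sum>c"
    using sum_list_sum_nth[of ?cs] sum_list_distinct_conv_sum_set[of ?cs id] fin c(2) by simp
  finally have "(\<Sum>\<alpha>=1..k. ?cs ! (\<alpha> - 1) - \<alpha>) + \<Sum>{1..k} = \<Sum>c"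
    using ge by (simp add: sum.distrib[symmetric])
  then have "\<Sum>c + \<Sum>{1..k} = (\<Sum>\<alpha>=1..k. ?cs ! (\<alpha> - 1) - \<alpha>) + 2 * \<Sum>{1..k}"
    by simp
  then show ?thesis
    by (simp only: neg_one_power_add_double)
qed

lemma cullis_det_eq_sum_det:
  fixes X :: "nat \<times> nat \<Rightarrow> 'a::field"
  shows "cullis_det n k X =
     (\<Sum>c\<in>{c. c \<subseteq> {1..n} \<and> card c = k}. (-1) ^ (\<Sum>c + \<Sum>{1..k}) * det (row_submatrix k X c))"
  unfolding cullis_det_def Let_def
proof (intro sum.cong refl arg_cong2[where f = "(*)"])
  fix c assume "c \<in> {c. c \<subseteq> {1..n} \<and> card c = k}"
  then show "(-1::'a) ^ (\<Sum>\<alpha>=1..k. sorted_list_of_set c ! (\<alpha> - 1) - \<alpha>) = (-1) ^ (\<Sum>c + \<Sum>{1..k})"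
    by (intro cullis_sign_eq) auto
  show "(\<Sum>p\<in>{p. p permutes {1..k}}. of_int (sign p) * (\<Prod>\<alpha>=1..k. X (sorted_list_of_set c ! (\<alpha> - 1), p \<alpha>)))
      = det (row_submatrix k X c)"
    unfolding row_submatrix_def
    by (subst sum_permutes_atLeastAtMost_eq_det
        [where M = "\<lambda>\<alpha> \<beta>. X (sorted_list_of_set c ! (\<alpha> - 1), \<beta>)"]) simp
qed

definition delete_row_col ::
  "nat \<Rightarrow> nat \<Rightarrow> nat \<Rightarrow> nat \<Rightarrow> (nat \<times> nat \<Rightarrow> 'a::zero) \<Rightarrow> nat \<times> nat \<Rightarrow> 'a" where
  "delete_row_col n k i j X =
     (\<lambda>(r, t). if r \<in> {1..n-1} \<and> t \<in> {1..k-1} then X (insert_index i r, insert_index j t) else 0)"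

lemma strict_mono_insert_index: "strict_mono (insert_index i)"
  by (auto simp: strict_mono_def insert_index_def)

lemma image_vimage_insert_index: "insert_index i ` (insert_index i -` c) = c - {i}"
proof (intro Set.set_eqI iffI)
  fix x assume "x \<in> c - {i}"
  then show "x \<in> insert_index i ` (insert_index i -` c)"
    using insert_delete_index[of x i] by (metis DiffD1 DiffD2 image_eqI insertI1 vimageI)
qed auto

lemma vimage_insert_index_subset:
  assumes "c \<subseteq> {1..n}" and "i \<in> {1..n}"
  shows "insert_index i -` c \<subseteq> {1..n-1}"
  using assms by (force simp: insert_index_def split: if_splits)

lemma sum_vimage_insert_index:
  assumes "finite c" and "i \<in> c"
  shows "\<Sum>c = i + \<Sum>(insert_index i -` c) + card {r \<in> c. i < r}"
proof -
  let ?c' = "insert_index i -` c"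
  note inj = insert_index_inj_on[of i]
  have fin: "finite ?c'" using finite_vimageI[OF assms(1) inj[of UNIV]] .
  have "\<Sum>(c - {i}) = (\<Sum>r\<in>?c'. insert_index i r)"
    unfolding image_vimage_insert_index[symmetric] by (rule sum.reindex[OF inj, unfolded comp_def])
  also have "\<dots> = (\<Sum>r\<in>?c'. r + (if i \<le> r then 1 else 0))"
    by (intro sum.cong) (auto simp: insert_index_def)
  also have "\<dots> = \<Sum>?c' + card {r \<in> ?c'. i \<le> r}"
    using fin by (simp add: sum.distrib sum.inter_filter[symmetric])
  also have "card {r \<in> ?c'. i \<le> r} = card {r \<in> c. i < r}"
  proof -
    have "insert_index i ` {r \<in> ?c'. i \<le> r} = {r \<in> c. i < r}"
    proof (intro Set.set_eqI iffI)
      fix x assume "x \<in> {r \<in> c. i < r}"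
      then show "x \<in> insert_index i ` {r \<in> ?c'. i \<le> r}"
        by (intro image_eqI[of _ _ "x - 1"]) auto
    qed auto
    then show ?thesis using card_image[OF inj] by metis
  qed
  finally show ?thesis
    using sum.remove[OF assms, of "\<lambda>x. x"] by simp
qed

lemma bij_betw_vimage_insert_index:
  assumes "i \<in> {1..n}" and "1 \<le> k"
  shows "bij_betw (\<lambda>c. insert_index i -` c)
           {c. c \<subseteq> {1..n} \<and> card c = k \<and> i \<in> c} {c. c \<subseteq> {1..n-1} \<and> card c = k - 1}"
proof (rule bij_betw_byWitness[where f' = "\<lambda>c'. insert i (insert_index i ` c')"])
  note inj = insert_index_inj_on[of i]
  show "\<forall>c\<in>{c. c \<subseteq> {1..n} \<and> card c = k \<and> i \<in> c}. insert i (insert_index i ` (insert_index i -` c)) = c"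
    unfolding image_vimage_insert_index by (simp add: insert_absorb)
  show "\<forall>c'\<in>{c. c \<subseteq> {1..n-1} \<and> card c = k - 1}. insert_index i -` insert i (insert_index i ` c') = c'"
  proof
    fix c' :: "nat set"
    have "insert_index i -` insert i (insert_index i ` c') = insert_index i -` (insert_index i ` c')"
      by auto
    then show "insert_index i -` insert i (insert_index i ` c') = c'"
      using inj_vimage_image_eq[OF inj[of UNIV]] by simp
  qed
  show "(\<lambda>c. insert_index i -` c) ` {c. c \<subseteq> {1..n} \<and> card c = k \<and> i \<in> c}
      \<subseteq> {c. c \<subseteq> {1..n-1} \<and> card c = k - 1}"
  proof (rule image_subsetI)
    fix c assume "c \<in> {c. c \<subseteq> {1..n} \<and> card c = k \<and> i \<in> c}"
    then have c: "c \<subseteq> {1..n}" "card c = k" "i \<in> c" by auto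
    have "card (insert_index i -` c) = card (c - {i})"
      using card_image[OF inj, of "insert_index i -` c"] by (simp only: image_vimage_insert_index)
    then show "insert_index i -` c \<in> {c. c \<subseteq> {1..n-1} \<and> card c = k - 1}"
      using c vimage_insert_index_subset[OF c(1) assms(1)] by simp
  qed
  show "(\<lambda>c'. insert i (insert_index i ` c')) ` {c. c \<subseteq> {1..n-1} \<and> card c = k - 1}
      \<subseteq> {c. c \<subseteq> {1..n} \<and> card c = k \<and> i \<in> c}"
  proof (rule image_subsetI)
    fix c' assume "c' \<in> {c. c \<subseteq> {1..n-1} \<and> card c = k - 1}"
    then have c': "c' \<subseteq> {1..n-1}" "card c' = k - 1" by auto
    then have "finite c'" using finite_subset by blast
    moreover have "i \<notin> insert_index i ` c'"
      by (metis imageE insert_index_exclude)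
    ultimately have "card (insert i (insert_index i ` c')) = k"
      using c' assms(2) by (simp add: card_image[OF inj])
    moreover have "insert_index i r \<in> {1..n}" if "r \<in> {1..n-1}" for r
      using that assms(1) by (cases "r < i") auto
    then have "insert i (insert_index i ` c') \<subseteq> {1..n}"
      using c'(1) assms(1) by blast
    ultimately show "insert i (insert_index i ` c') \<in> {c. c \<subseteq> {1..n} \<and> card c = k \<and> i \<in> c}"
      by simp
  qed
qed

lemma det_row_submatrix_unit_column:
  fixes X :: "nat \<times> nat \<Rightarrow> 'a::field"
  assumes c: "c \<subseteq> {1..n}" "card c = k" "i \<in> c" and j: "j \<in> {1..k}"
    and col: "\<And>r. r \<in> {1..n} \<Longrightarrow> X (r, j) = (if r = i then 1 else 0)"
  shows "det (row_submatrix k X c) = (-1) ^ (card {r \<in> c. r < i} + (j - 1)) *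
           det (row_submatrix (k - 1) (delete_row_col n k i j X) (insert_index i -` c))"
proof -
  let ?cs = "sorted_list_of_set c" and ?c' = "insert_index i -` c"
  let ?cs' = "sorted_list_of_set ?c'"
  have fin: "finite c" using c(1) finite_subset by blast
  have i: "i \<in> {1..n}" using c by blast
  have len_cs: "length ?cs = k" using c(2) by simp
  have "i \<in> set ?cs" using c(3) fin by simp
  then obtain q where q: "q < k" "?cs ! q = i" using len_cs by (auto simp: in_set_conv_nth)
  have dist: "distinct ?cs" by simp
  have q_card: "card {r \<in> c. r < i} = q"
    using card_less_nth_sorted[OF strict_sorted_list_of_set, of q c] q fin c(2) by simp
  have fin': "finite ?c'"
    using finite_subset[OF vimage_insert_index_subset[OF c(1) i]] by blast
  have "take q ?cs @ drop (Suc q) ?cs = sorted_list_of_set (c - {i})"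
    using remove1_nth_eq_take_drop[OF dist, of q] q fin c(2) by (simp add: sorted_list_of_set_remove)
  also have "\<dots> = map (insert_index i) ?cs'"
    unfolding image_vimage_insert_index[symmetric]
    by (rule sorted_list_of_set_image_strict_mono[OF strict_mono_insert_index fin'])
  finally have split: "take q ?cs @ drop (Suc q) ?cs = map (insert_index i) ?cs'" .
  have len: "length ?cs' = k - 1"
    using arg_cong[OF split, of length] q fin c(2) by simp
  have cs_del: "?cs ! insert_index q a = insert_index i (?cs' ! a)" if "a < k - 1" for a
  proof -
    have "(take q ?cs @ drop (Suc q) ?cs) ! a = ?cs ! insert_index q a"
      using that q fin c(2) by (cases "a < q") (simp_all add: nth_append)
    then show ?thesis using split that len by simp
  qed
  have "row_submatrix k X c $$ (a, j - 1) = (if a = q then 1 else 0)" if "a < k" for a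
  proof -
    have "?cs ! a \<in> c" using nth_mem[of a ?cs] that len_cs fin by simp
    moreover have "?cs ! a = i \<longleftrightarrow> a = q"
      using nth_eq_iff_index_eq[OF dist, of a q] that q fin c(2) by simp
    ultimately show ?thesis
      using that j c(1) col by (auto simp: row_submatrix_def)
  qed
  then have "det (row_submatrix k X c) = (-1) ^ (q + (j - 1)) * det (mat_delete (row_submatrix k X c) q (j - 1))"
    using j q by (intro det_unit_column) (auto simp: row_submatrix_def)
  also have "mat_delete (row_submatrix k X c) q (j - 1) = row_submatrix (k - 1) (delete_row_col n k i j X) ?c'"
  proof (rule eq_matI)
    fix a b assume ab: "a < dim_row (row_submatrix (k - 1) (delete_row_col n k i j X) ?c')"
                       "b < dim_col (row_submatrix (k - 1) (delete_row_col n k i j X) ?c')"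
    then have "?cs' ! a \<in> ?c'"
      using nth_mem[of a ?cs'] len fin' by (simp add: row_submatrix_def)
    then have "?cs' ! a \<in> {1..n-1}" using vimage_insert_index_subset[OF c(1) i] by blast
    moreover have "Suc (insert_index (j - 1) b) = insert_index j (Suc b)"
      using j by (auto simp: insert_index_def)
    moreover have "mat_delete (row_submatrix k X c) q (j - 1) $$ (a, b) =
        X (?cs ! insert_index q a, Suc (insert_index (j - 1) b))"
      using ab by (simp add: mat_delete_def row_submatrix_def insert_index_def)
    ultimately show "mat_delete (row_submatrix k X c) q (j - 1) $$ (a, b) =
               row_submatrix (k - 1) (delete_row_col n k i j X) ?c' $$ (a, b)"
      using ab cs_del[of a] by (simp add: row_submatrix_def delete_row_col_def)
  qed (auto simp: mat_delete_def row_submatrix_def)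
  finally show ?thesis using q_card by simp
qed

lemma signed_det_row_submatrix_unit_column:
  fixes X :: "nat \<times> nat \<Rightarrow> 'a::field"
  assumes c: "c \<subseteq> {1..n}" "card c = k" "i \<in> c" and j: "j \<in> {1..k}"
    and col: "\<And>r. r \<in> {1..n} \<Longrightarrow> X (r, j) = (if r = i then 1 else 0)"
  shows "(-1) ^ (\<Sum>c + \<Sum>{1..k}) * det (row_submatrix k X c) =
         (-1) ^ (i + j) * ((-1) ^ (\<Sum>(insert_index i -` c) + \<Sum>{1..k-1}) *
           det (row_submatrix (k - 1) (delete_row_col n k i j X) (insert_index i -` c)))"
proof -
  let ?c' = "insert_index i -` c"
  let ?D = "det (row_submatrix (k - 1) (delete_row_col n k i j X) ?c')"
  define below where "below = card {r \<in> c. r < i}"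
  define above where "above = card {r \<in> c. i < r}"
  have fin: "finite c" using c(1) finite_subset by blast
  have "k = Suc (below + above)"
  proof -
    have "insert i ({r \<in> c. r < i} \<union> {r \<in> c. i < r}) = c" using c(3) by auto
    moreover have "card (insert i ({r \<in> c. r < i} \<union> {r \<in> c. i < r})) =
        Suc (card {r \<in> c. r < i} + card {r \<in> c. i < r})"
      using fin by (simp add: card_Un_disjoint disjoint_iff)
    ultimately show ?thesis using c(2) unfolding below_def above_def by simp
  qed
  moreover have "\<Sum>c = i + \<Sum>?c' + above"
    unfolding above_def by (rule sum_vimage_insert_index[OF fin c(3)])
  moreover have "\<Sum>{1..k} = \<Sum>{1..k-1} + k"
    using j by (cases k) auto
  ultimately have "(\<Sum>c + \<Sum>{1..k}) + (below + (j - 1)) = (i + j + (\<Sum>?c' + \<Sum>{1..k-1})) + 2 * (k - 1)"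
    using j by simp
  then have sign: "(-1::'a) ^ (\<Sum>c + \<Sum>{1..k}) * (-1) ^ (below + (j - 1)) =
      (-1) ^ (i + j) * (-1) ^ (\<Sum>?c' + \<Sum>{1..k-1})"
    by (metis neg_one_power_add_double power_add)
  have "(-1) ^ (\<Sum>c + \<Sum>{1..k}) * det (row_submatrix k X c) =
      (-1) ^ (\<Sum>c + \<Sum>{1..k}) * ((-1) ^ (below + (j - 1)) * ?D)"
    using det_row_submatrix_unit_column[OF c j col] unfolding below_def by simp
  also have "\<dots> = (-1) ^ (i + j) * ((-1) ^ (\<Sum>?c' + \<Sum>{1..k-1}) * ?D)"
    using sign by (simp only: mult.assoc[symmetric])
  finally show ?thesis .
qed

theorem cullis_det_unit_column:
  fixes X :: "nat \<times> nat \<Rightarrow> 'a::field"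
  assumes i: "i \<in> {1..n}" and j: "j \<in> {1..k}"
    and col: "\<And>r. r \<in> {1..n} \<Longrightarrow> X (r, j) = (if r = i then 1 else 0)"
  shows "cullis_det n k X = (-1) ^ (i + j) * cullis_det (n - 1) (k - 1) (delete_row_col n k i j X)"
proof -
  let ?Y = "delete_row_col n k i j X"
  have k: "1 \<le> k" using j by simp
  have "cullis_det n k X =
      (\<Sum>c\<in>{c. c \<subseteq> {1..n} \<and> card c = k \<and> i \<in> c}. (-1) ^ (\<Sum>c + \<Sum>{1..k}) * det (row_submatrix k X c))"
    unfolding cullis_det_eq_sum_det
  proof (rule sum.mono_neutral_right)
    show "finite {c. c \<subseteq> {1..n} \<and> card c = k}"
      by (rule finite_subset[of _ "Pow {1..n}"]) auto
    show "\<forall>c\<in>{c. c \<subseteq> {1..n} \<and> card c = k} - {c. c \<subseteq> {1..n} \<and> card c = k \<and> i \<in> c}.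
        (-1) ^ (\<Sum>c + \<Sum>{1..k}) * det (row_submatrix k X c) = 0"
    proof
      fix c assume "c \<in> {c. c \<subseteq> {1..n} \<and> card c = k} - {c. c \<subseteq> {1..n} \<and> card c = k \<and> i \<in> c}"
      then have c: "c \<subseteq> {1..n}" "card c = k" "i \<notin> c" by auto
      have "row_submatrix k X c $$ (a, j - 1) = 0" if "a < k" for a
      proof -
        have "sorted_list_of_set c ! a \<in> c"
          using nth_mem[of a "sorted_list_of_set c"] that c finite_subset[OF c(1)] by simp
        then show ?thesis using that j c col by (auto simp: row_submatrix_def)
      qed
      then have "det (row_submatrix k X c) = 0"
        using j by (intro det_zero_column[where j = "j - 1"]) (auto simp: row_submatrix_def)
      then show "(-1) ^ (\<Sum>c + \<Sum>{1..k}) * det (row_submatrix k X c) = 0" by simp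
    qed
  qed auto
  also have "\<dots> = (\<Sum>c\<in>{c. c \<subseteq> {1..n} \<and> card c = k \<and> i \<in> c}. (-1) ^ (i + j) *
      ((-1) ^ (\<Sum>(insert_index i -` c) + \<Sum>{1..k-1}) * det (row_submatrix (k - 1) ?Y (insert_index i -` c))))"
    by (intro sum.cong refl signed_det_row_submatrix_unit_column[OF _ _ _ j col]) auto
  also have "\<dots> = (\<Sum>c'\<in>{c. c \<subseteq> {1..n-1} \<and> card c = k - 1}.
      (-1) ^ (i + j) * ((-1) ^ (\<Sum>c' + \<Sum>{1..k-1}) * det (row_submatrix (k - 1) ?Y c')))"
    by (rule sum.reindex_bij_betw[OF bij_betw_vimage_insert_index[OF i k]])
  also have "\<dots> = (-1) ^ (i + j) * cullis_det (n - 1) (k - 1) ?Y"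
    by (simp add: cullis_det_eq_sum_det sum_distrib_left)
  finally show ?thesis .
qed

section \<open>Coordinates on the direction of a linear variety\<close>

interpretation FV: vector_space "fscale :: 'a::field \<Rightarrow> ('b \<Rightarrow> 'a) \<Rightarrow> ('b \<Rightarrow> 'a)"
  by unfold_locales (auto simp: fscale_def fun_eq_iff algebra_simps)

lemma fscale_apply [simp]: "fscale c x e = c * x e"
  by (simp add: fscale_def)

lemma sum_fun_apply: "(\<Sum>x\<in>A. F x) e = (\<Sum>x\<in>A. F x e)"
  by (induction A rule: infinite_finite_induct) auto

lemma (in vector_space) card_le_dim_if_finite_span:
  assumes "S \<subseteq> W" and "independent S" and "W \<subseteq> span T" and "finite T"
  shows "card S \<le> dim W"
proof -
  obtain A where A: "A \<subseteq> W" "independent A" "W \<subseteq> span A" "card A = dim W"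
    by (rule basis_exists)
  have "finite A"
    using independent_span_bound[OF assms(4) A(2)] A(1) assms(3) by blast
  moreover have "S \<subseteq> span A" using assms(1) A(3) by blast
  ultimately have "card S \<le> card A" using independent_span_bound[OF _ assms(2)] by blast
  then show ?thesis using A(4) by simp
qed

lemma direction_translate:
  assumes "FV.subspace V"
  shows "direction ((\<lambda>v. s + v) ` V) = V"
proof (intro Set.set_eqI iffI)
  fix x assume "x \<in> direction ((\<lambda>v. s + v) ` V)"
  then obtain a b where "a \<in> V" "b \<in> V" "x = (s + a) - (s + b)" unfolding direction_def by blast
  then show "x \<in> V" using FV.subspace_diff[OF assms] by simp
next
  fix x assume "x \<in> V"
  then have "s + x \<in> (\<lambda>v. s + v) ` V" "s + 0 \<in> (\<lambda>v. s + v) ` V"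
    using FV.subspace_0[OF assms] by blast+
  then show "x \<in> direction ((\<lambda>v. s + v) ` V)" unfolding direction_def by force
qed

lemma biorthogonal_independent:
  fixes u :: "'c \<Rightarrow> 'b \<Rightarrow> 'a::field"
  assumes "finite S" and biorth: "\<And>e e'. e \<in> S \<Longrightarrow> e' \<in> S \<Longrightarrow> u e (x e') = (if e = e' then 1 else 0)"
  shows "inj_on u S" and "FV.independent (u ` S)"
proof -
  show inj: "inj_on u S"
  proof (rule inj_onI)
    fix e e' assume "e \<in> S" "e' \<in> S" "u e = u e'"
    then show "e = e'" using biorth[of e e'] biorth[of e' e'] by (cases "e = e'") auto
  qed
  show "FV.independent (u ` S)"
  proof (rule FV.independent_if_scalars_zero)
    show "finite (u ` S)" using assms(1) by simp
    fix c v assume sum0: "(\<Sum>w\<in>u ` S. fscale (c w) w) = 0" and "v \<in> u ` S"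
    then obtain e where e: "e \<in> S" "v = u e" by blast
    have "0 = (\<Sum>w\<in>u ` S. fscale (c w) w) (x e)" using sum0 by simp
    also have "\<dots> = (\<Sum>e'\<in>S. c (u e') * u e' (x e))"
      by (simp add: sum_fun_apply sum.reindex[OF inj])
    also have "\<dots> = (\<Sum>e'\<in>S. if e' = e then c (u e') else 0)"
      using e(1) by (intro sum.cong) (simp_all add: biorth)
    also have "\<dots> = c (u e)"
      using e(1) assms(1) by simp
    finally show "c v = 0" using e(2) by simp
  qed
qed

lemma mat_indep_subset:
  assumes "finite T" and "S \<subseteq> T" and "mat_indep V T"
  shows "mat_indep V S"
  unfolding mat_indep_def
proof (intro allI impI ballI)
  fix c :: "nat \<times> nat \<Rightarrow> 'a" and e
  assume S0: "\<forall>v\<in>V. (\<Sum>e\<in>S. c e * v e) = 0" and e: "e \<in> S"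
  let ?c = "\<lambda>e. if e \<in> S then c e else 0"
  have "(\<Sum>e\<in>T. ?c e * v e) = (\<Sum>e\<in>S. c e * v e)" for v :: "nat \<times> nat \<Rightarrow> 'a"
    using assms(1,2) by (simp add: if_distrib[of "\<lambda>y. y * _"] sum.inter_restrict[symmetric] Int_absorb1 cong: if_cong)
  then have "\<forall>e\<in>T. ?c e = 0"
    using assms(3)[unfolded mat_indep_def, rule_format, of ?c] S0 by simp
  then have "?c e = 0" using e assms(2) by blast
  then show "c e = 0" using e by simp
qed

lemma mat_indep_insert_separating:
  fixes V :: "(nat \<times> nat \<Rightarrow> 'a::field) set"
  assumes V: "FV.subspace V" and B: "finite B" "b \<notin> B" and indep: "mat_indep V (insert b B)"
    and interpolate: "\<And>g. \<exists>v\<in>V. \<forall>f\<in>B. v f = g f"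
  shows "\<exists>u\<in>V. (\<forall>f\<in>B. u f = 0) \<and> u b \<noteq> 0"
proof (rule ccontr)
  assume no_u: "\<not> ?thesis"
  obtain w where w: "\<And>f. w f \<in> V" "\<And>f f'. f' \<in> B \<Longrightarrow> w f f' = (if f' = f then 1 else 0)"
    using interpolate[of "\<lambda>f'. if f' = _ then 1 else 0"] by metis
  \<comment> \<open>Then every \<open>v \<in> V\<close> agrees at \<open>b\<close> with its interpolant \<open>\<Sum>f\<in>B. v f \<cdot> w f\<close>,
      a linear dependency between the coordinate \<open>b\<close> and those in \<open>B\<close>.\<close>
  have expand: "v b = (\<Sum>f\<in>B. v f * w f b)" if v: "v \<in> V" for v
  proof -
    let ?u = "v - (\<Sum>f\<in>B. fscale (v f) (w f))"
    have "?u \<in> V"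
      using V v w(1) by (intro FV.subspace_diff FV.subspace_sum FV.subspace_scale) auto
    moreover have "?u f' = 0" if "f' \<in> B" for f'
    proof -
      have "(\<Sum>f\<in>B. v f * w f f') = (\<Sum>f\<in>B. if f = f' then v f else 0)"
        using that by (intro sum.cong) (simp_all add: w(2))
      then show ?thesis using that B(1) by (simp add: sum_fun_apply)
    qed
    ultimately have "?u b = 0" using no_u by blast
    then show ?thesis by (simp add: sum_fun_apply)
  qed
  let ?c = "\<lambda>e. if e = b then 1 else - w e b"
  have "(\<Sum>e\<in>insert b B. ?c e * v e) = 0" if "v \<in> V" for v
  proof -
    have "(\<Sum>e\<in>B. ?c e * v e) = (\<Sum>f\<in>B. - (v f * w f b))"
      using B(2) by (intro sum.cong) auto
    then show ?thesis using B expand[OF that] by (simp add: sum_negf)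
  qed
  then have "?c b = 0"
    using indep[unfolded mat_indep_def, rule_format, of ?c b] by blast
  then show False by simp
qed

lemma mat_indep_interpolate:
  fixes V :: "(nat \<times> nat \<Rightarrow> 'a::field) set"
  assumes V: "FV.subspace V" and "finite B" and "mat_indep V B"
  shows "\<exists>v\<in>V. \<forall>f\<in>B. v f = g f"
  using assms(2,3)
proof (induction B arbitrary: g rule: finite_induct)
  case empty
  then show ?case using FV.subspace_0[OF V] by blast
next
  case (insert b B)
  have "mat_indep V B"
    using mat_indep_subset[OF _ _ insert.prems] insert.hyps(1) by blast
  then have IH: "\<exists>v\<in>V. \<forall>f\<in>B. v f = g f" for g using insert.IH by blast
  obtain u where u: "u \<in> V" "\<forall>f\<in>B. u f = 0" "u b \<noteq> 0"
    using mat_indep_insert_separating[OF V insert.hyps insert.prems IH] by blast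
  obtain v where v: "v \<in> V" "\<forall>f\<in>B. v f = g f" using IH by blast
  let ?v = "v + fscale ((g b - v b) / u b) u"
  have "?v \<in> V" using V u(1) v(1) by (intro FV.subspace_add FV.subspace_scale)
  moreover have "\<forall>f\<in>insert b B. ?v f = g f" using u v by auto
  ultimately show ?case by blast
qed

lemma supportedD: "x \<in> supported E \<Longrightarrow> e \<notin> E \<Longrightarrow> x e = 0"
  unfolding supported_def by (simp del: split_paired_All)

lemma mat_basis_eq_zero:
  assumes B: "mat_basis E V B" and "finite E" and "V \<subseteq> supported E"
    and v: "v \<in> V" and zero: "\<forall>f\<in>B. v f = 0"
  shows "v = 0"
proof
  fix e
  have BE: "B \<subseteq> E" and indB: "mat_indep V B" and max: "\<forall>e\<in>E - B. \<not> mat_indep V (insert e B)"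
    using B unfolding mat_basis_def by blast+
  have finB: "finite B" using BE assms(2) finite_subset by blast
  consider "e \<notin> E" | "e \<in> B" | "e \<in> E - B" by blast
  then show "v e = 0 e"
  proof cases
    case 1
    have "v \<in> supported E" using v assms(3) by blast
    then show ?thesis using 1 by (simp add: supportedD)
  next
    case 2
    then show ?thesis using zero by simp
  next
    case 3
    then have "\<not> mat_indep V (insert e B)" using max by blast
    then obtain c where c: "\<forall>w\<in>V. (\<Sum>f\<in>insert e B. c f * w f) = 0" and nz: "\<exists>f\<in>insert e B. c f \<noteq> 0"
      unfolding mat_indep_def by blast
    have split: "(\<Sum>f\<in>insert e B. c f * w f) = c e * w e + (\<Sum>f\<in>B. c f * w f)" for w :: "nat \<times> nat \<Rightarrow> 'a"
      using finB 3 by simp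
    have "c e \<noteq> 0"
    proof
      assume "c e = 0"
      then have "\<forall>w\<in>V. (\<Sum>f\<in>B. c f * w f) = 0" using c split by simp
      then have "\<forall>f\<in>B. c f = 0" using indB unfolding mat_indep_def by blast
      then show False using nz \<open>c e = 0\<close> by blast
    qed
    moreover have "c e * v e = 0" using c v split[of v] zero by simp
    ultimately show ?thesis by simp
  qed
qed

lemma mat_basis_dual_family:
  fixes V :: "(nat \<times> nat \<Rightarrow> 'a::field) set"
  assumes V: "FV.subspace V" and B: "mat_basis E V B" and "finite E" and "V \<subseteq> supported E"
  obtains u where "u ` B \<subseteq> V" and "\<And>e f. e \<in> B \<Longrightarrow> f \<in> B \<Longrightarrow> u e f = (if e = f then 1 else 0)"
    and "V \<subseteq> FV.span (u ` B)"
proof -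
  have finB: "finite B" and indB: "mat_indep V B"
    using B assms(3) finite_subset unfolding mat_basis_def by blast+
  obtain u where u: "\<And>e. u e \<in> V" "\<And>e f. f \<in> B \<Longrightarrow> u e f = (if e = f then 1 else 0)"
    using mat_indep_interpolate[OF V finB indB, of "\<lambda>f. if _ = f then 1 else 0"] by metis
  have span: "v \<in> FV.span (u ` B)" if v: "v \<in> V" for v
  proof -
    let ?w = "\<Sum>e\<in>B. fscale (v e) (u e)"
    have "?w f = v f" if "f \<in> B" for f
    proof -
      have "?w f = (\<Sum>e\<in>B. if e = f then v e else 0)"
        unfolding sum_fun_apply using that by (intro sum.cong) (simp_all add: u(2))
      then show ?thesis using that finB by simp
    qed
    moreover have "?w \<in> V"
      using V u(1) by (intro FV.subspace_sum FV.subspace_scale) auto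
    ultimately have "v - ?w = 0"
      using mat_basis_eq_zero[OF B assms(3,4), of "v - ?w"] FV.subspace_diff[OF V v] by simp
    moreover have "?w \<in> FV.span (u ` B)"
      by (intro FV.span_sum FV.span_scale FV.span_base) simp
    ultimately show ?thesis by simp
  qed
  show ?thesis
  proof (rule that)
    show "u ` B \<subseteq> V" using u(1) by blast
    show "u e f = (if e = f then 1 else 0)" if "e \<in> B" "f \<in> B" for e f
      using u(2) that by blast
    show "V \<subseteq> FV.span (u ` B)" using span by blast
  qed
qed

lemma dim_eq_card_mat_basis:
  fixes V :: "(nat \<times> nat \<Rightarrow> 'a::field) set"
  assumes V: "FV.subspace V" and B: "mat_basis E V B" and "finite E" and "V \<subseteq> supported E"
  shows "FV.dim V = card B"
proof -
  obtain u where u: "u ` B \<subseteq> V" "\<And>e f. e \<in> B \<Longrightarrow> f \<in> B \<Longrightarrow> u e f = (if e = f then 1 else 0)"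
    "V \<subseteq> FV.span (u ` B)"
    by (rule mat_basis_dual_family[OF assms]) blast
  have finB: "finite B" using B assms(3) finite_subset unfolding mat_basis_def by blast
  have "inj_on u B" "FV.independent (u ` B)"
    using biorthogonal_independent[OF finB, of u id] u(2) by auto
  then show ?thesis
    using FV.basis_card_eq_dim[OF u(1) u(3)] card_image by metis
qed

section \<open>Deleting a row and a column\<close>

lemma delete_row_col_supported: "delete_row_col n k i j X \<in> supported (idx (n - 1) (k - 1))"
  by (simp add: delete_row_col_def supported_def idx_def)

lemma linear_delete_row_col: "Vector_Spaces.linear fscale fscale (delete_row_col n k i j)"
  unfolding Vector_Spaces.linear_iff
  by (simp add: FV.vector_space_axioms delete_row_col_def fun_eq_iff)

lemma delete_row_col_delete_index:
  assumes "i \<in> {1..n}" and "j \<in> {1..k}" and "r \<in> {1..n} - {i}" and "t \<in> {1..k} - {j}"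
  shows "delete_row_col n k i j X (delete_index i r, delete_index j t) = X (r, t)"
  using assms by (auto simp: delete_row_col_def delete_index_def insert_index_def)

lemma card_le_dim_delete_row_col:
  fixes u :: "nat \<times> nat \<Rightarrow> nat \<times> nat \<Rightarrow> 'a::field"
  assumes ij: "i \<in> {1..n}" "j \<in> {1..k}"
    and S: "S \<subseteq> ({1..n} - {i}) \<times> ({1..k} - {j})" "finite S"
    and biorth: "\<And>e f. e \<in> S \<Longrightarrow> f \<in> S \<Longrightarrow> u e f = (if e = f then 1 else 0)"
    and uW: "u ` S \<subseteq> W" and W: "W \<subseteq> FV.span U" and U: "finite U"
  shows "card S \<le> FV.dim (delete_row_col n k i j ` W)"
proof -
  interpret R: Vector_Spaces.linear fscale fscale "delete_row_col n k i j"
    by (rule linear_delete_row_col)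
  let ?v = "\<lambda>e. delete_row_col n k i j (u e)"
  let ?x = "\<lambda>f. (delete_index i (fst f), delete_index j (snd f))"
  have "?v e (?x f) = u e f" if "f \<in> S" for e f
  proof -
    have "f \<in> ({1..n} - {i}) \<times> ({1..k} - {j})" using that S(1) by blast
    then show ?thesis using delete_row_col_delete_index[OF ij, of "fst f" "snd f" "u e"] by (simp add: mem_Times_iff)
  qed
  then have "?v e (?x f) = (if e = f then 1 else 0)" if "e \<in> S" "f \<in> S" for e f
    using that biorth by simp
  then have inj: "inj_on ?v S" and indep: "FV.independent (?v ` S)"
    using biorthogonal_independent[OF S(2), of ?v ?x] by auto
  have "?v ` S \<subseteq> delete_row_col n k i j ` W"
    using uW by blast
  moreover have "delete_row_col n k i j ` W \<subseteq> FV.span (delete_row_col n k i j ` U)"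
    using W R.span_image by blast
  ultimately have "card (?v ` S) \<le> FV.dim (delete_row_col n k i j ` W)"
    using FV.card_le_dim_if_finite_span[OF _ indep] U by blast
  then show ?thesis using card_image[OF inj] by simp
qed

lemma card_minor_split:
  assumes "B \<subseteq> idx n k" and "i \<in> {1..n}" and "j \<in> {1..k}" and "{1..n} \<times> {j} \<subseteq> B"
  shows "(n - 1) * (k - 1) = card (B \<inter> ({1..n} - {i}) \<times> ({1..k} - {j})) + card (idx n k - B - {i} \<times> {1..k})"
proof -
  let ?M = "({1..n} - {i}) \<times> ({1..k} - {j})"
  have "?M - B = idx n k - B - {i} \<times> {1..k}"
    using assms unfolding idx_def by auto
  moreover have "card ((B \<inter> ?M) \<union> (?M - B)) = card (B \<inter> ?M) + card (?M - B)"
    by (rule card_Un_disjoint) auto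
  moreover have "(B \<inter> ?M) \<union> (?M - B) = ?M" by blast
  moreover have "card ?M = (n - 1) * (k - 1)"
    using assms(2,3) by (simp add: card_cartesian_product)
  ultimately show ?thesis by simp
qed

lemma exists_unit_column_translate:
  fixes s :: "nat \<times> nat \<Rightarrow> 'a::field"
  assumes V: "FV.subspace V" and B: "finite B" "mat_indep V B" and col: "{1..n} \<times> {j} \<subseteq> B"
  shows "\<exists>v\<in>V. \<forall>r\<in>{1..n}. (s + v) (r, j) = (if r = i then 1 else 0)"
proof -
  obtain v where v: "v \<in> V" "\<forall>f\<in>B. v f = (if fst f = i then 1 else 0) - s f"
    using mat_indep_interpolate[OF V B, of "\<lambda>f. (if fst f = i then 1 else 0) - s f"] by blast
  have "(s + v) (r, j) = (if r = i then 1 else 0)" if "r \<in> {1..n}" for r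
  proof -
    have "(r, j) \<in> B" using col that by blast
    then show ?thesis using v(2) by simp
  qed
  then show ?thesis using v(1) by blast
qed

lemma card_le_dim_reduced_directions:
  fixes V :: "(nat \<times> nat \<Rightarrow> 'a::field) set"
  assumes V: "FV.subspace V" "V \<subseteq> supported (idx n k)" and B: "mat_basis (idx n k) V B"
    and i: "i \<in> {1..n}" and j: "j \<in> {1..k}" and col: "{1..n} \<times> {j} \<subseteq> B"
  shows "card (B \<inter> ({1..n} - {i}) \<times> ({1..k} - {j}))
           \<le> FV.dim (delete_row_col n k i j ` {w \<in> V. \<forall>r\<in>{1..n}. w (r, j) = 0})"
proof -
  let ?S = "B \<inter> ({1..n} - {i}) \<times> ({1..k} - {j})" and ?W = "{w \<in> V. \<forall>r\<in>{1..n}. w (r, j) = 0}"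
  have finE: "finite (idx n k)" by (simp add: idx_def)
  then have finB: "finite B" using B finite_subset unfolding mat_basis_def by blast
  obtain u where u: "u ` B \<subseteq> V" "\<And>e f. e \<in> B \<Longrightarrow> f \<in> B \<Longrightarrow> u e f = (if e = f then 1 else 0)"
    "V \<subseteq> FV.span (u ` B)"
    by (rule mat_basis_dual_family[OF V(1) B finE V(2)]) blast
  have "u ` ?S \<subseteq> ?W"
  proof (rule image_subsetI)
    fix e assume e: "e \<in> ?S"
    have "u e (r, j) = 0" if "r \<in> {1..n}" for r
    proof -
      have "(r, j) \<in> B" using col that by blast
      moreover have "e \<noteq> (r, j)" using e by auto
      ultimately show ?thesis using u(2) e by simp
    qed
    then show "u e \<in> ?W" using u(1) e by blast
  qed
  then show ?thesis
  proof (intro card_le_dim_delete_row_col[OF i j])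
    show "u e f = (if e = f then 1 else 0)" if "e \<in> ?S" "f \<in> ?S" for e f
      using u(2) that by blast
    show "?W \<subseteq> FV.span (u ` B)" using u(3) by blast
  qed (use finB in auto)
qed

proposition reduce_along_unit_column:
  fixes s :: "nat \<times> nat \<Rightarrow> 'a::field"
  assumes V: "FV.subspace V" "V \<subseteq> supported (idx n k)" and B: "mat_basis (idx n k) V B"
    and i: "i \<in> {1..n}" and j: "j \<in> {1..k}"
    and col: "{1..n} \<times> {j} \<subseteq> B" and vanish: "\<forall>v\<in>V. cullis_det n k (s + v) = 0"
  shows "\<exists>K' :: (nat \<times> nat \<Rightarrow> 'a) set. linear_variety (idx (n - 1) (k - 1)) K' \<and>
           codim (idx (n - 1) (k - 1)) K' \<le> card (idx n k - B - {i} \<times> {1..k}) \<and>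
           (\<forall>X'\<in>K'. cullis_det (n - 1) (k - 1) X' = 0)"
proof -
  let ?E' = "idx (n - 1) (k - 1)" and ?R = "delete_row_col n k i j"
  let ?W = "{w \<in> V. \<forall>r\<in>{1..n}. w (r, j) = 0}"
  interpret R: Vector_Spaces.linear fscale fscale ?R by (rule linear_delete_row_col)
  have BE: "B \<subseteq> idx n k" and finB: "finite B" and indB: "mat_indep V B"
    using B finite_subset[of B "idx n k"] unfolding mat_basis_def idx_def by auto
  obtain v where v: "v \<in> V" and unit: "\<forall>r\<in>{1..n}. (s + v) (r, j) = (if r = i then 1 else 0)"
    using exists_unit_column_translate[OF V(1) finB indB col] by blast
  have W: "FV.subspace ?W"
    using V(1) unfolding FV.subspace_def by auto
  define K' where "K' = (\<lambda>w. ?R (s + v) + w) ` (?R ` ?W)"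
  have "linear_variety ?E' K'"
    unfolding linear_variety_def K'_def
    using delete_row_col_supported R.subspace_image[OF W] by blast
  moreover have "\<forall>X'\<in>K'. cullis_det (n - 1) (k - 1) X' = 0"
  proof
    fix X' assume "X' \<in> K'"
    then obtain w where "w \<in> ?W" "X' = ?R (s + v) + ?R w" unfolding K'_def by blast
    then have w: "w \<in> ?W" "X' = ?R (s + v + w)" by (simp_all add: R.add)
    have "v + w \<in> V" using w(1) v FV.subspace_add[OF V(1)] by blast
    then have "cullis_det n k (s + v + w) = 0" using vanish by (simp add: add.assoc)
    moreover have unit_col: "(s + v + w) (r, j) = (if r = i then 1 else 0)" if "r \<in> {1..n}" for r
      using unit w(1) that by simp
    ultimately show "cullis_det (n - 1) (k - 1) X' = 0"
      using cullis_det_unit_column[where X = "s + v + w", OF i j unit_col] w(2) by simp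
  qed
  moreover have "codim ?E' K' \<le> card (idx n k - B - {i} \<times> {1..k})"
  proof -
    have "direction K' = ?R ` ?W"
      unfolding K'_def by (rule direction_translate[OF R.subspace_image[OF W]])
    moreover have "card ?E' = (n - 1) * (k - 1)"
      by (simp add: idx_def card_cartesian_product)
    ultimately show ?thesis
      using card_minor_split[OF BE i j col] card_le_dim_reduced_directions[OF V B i j col]
      unfolding codim_def by simp
  qed
  ultimately show ?thesis by blast
qed

lemma codim_translate_eq_card_cobasis:
  assumes "FV.subspace V" and "V \<subseteq> supported E" and "finite E" and "mat_basis E V B"
  shows "codim E ((\<lambda>v. s + v) ` V) = card (E - B)"
proof -
  have "B \<subseteq> E" using assms(4) unfolding mat_basis_def by blast
  then show ?thesis
    unfolding codim_def direction_translate[OF assms(1)] dim_eq_card_mat_basis[OF assms(1,4,3,2)]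
    using card_Diff_subset[OF finite_subset[OF _ assms(3)]] by simp
qed

theorem mainTheorem7:
  fixes n k l i' j' :: nat and K :: "((nat \<times> nat) \<Rightarrow> 'a::field) set" and Bstar :: "(nat \<times> nat) set"
  assumes "1 < k" and "k \<le> n"
    and "linear_variety (idx n k) K"
    and "\<forall>X\<in>K. cullis_det n k X = 0"
    and "mat_cobasis (idx n k) (direction K) Bstar"
    and "1 \<le> i'" and "i' \<le> n" and "1 \<le> j'" and "j' \<le> k"
    and "card (Bstar \<inter> ({i'} \<times> {1..k})) = l"
    and "Bstar \<inter> ({1..n} \<times> {j'}) = {}"
  shows "\<exists>K' :: ((nat \<times> nat) \<Rightarrow> 'a) set. linear_variety (idx (n - 1) (k - 1)) K' \<and>
           int (codim (idx (n - 1) (k - 1)) K') \<le> int (codim (idx n k) K) - int l \<and>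
           (\<forall>X'\<in>K'. cullis_det (n - 1) (k - 1) X' = 0)"
proof -
  let ?E = "idx n k" and ?Row = "{i'} \<times> {1..k}"
  have finE: "finite ?E" by (simp add: idx_def)
  obtain s V where V: "FV.subspace V" "V \<subseteq> supported ?E" and K: "K = (\<lambda>v. s + v) ` V"
    using assms(3) unfolding linear_variety_def by blast
  obtain B where B: "mat_basis ?E V B" and Bstar: "Bstar = ?E - B"
    using assms(5) unfolding mat_cobasis_def K direction_translate[OF V(1)] by blast
  have codim: "codim ?E K = card Bstar"
    unfolding K Bstar by (rule codim_translate_eq_card_cobasis[OF V finE B])
  have i': "i' \<in> {1..n}" and j': "j' \<in> {1..k}" using assms(6-9) by auto
  have col: "{1..n} \<times> {j'} \<subseteq> B"
    using assms(11) j' unfolding Bstar idx_def by blast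
  have "\<forall>v\<in>V. cullis_det n k (s + v) = 0" using assms(4) K by blast
  then obtain K' :: "(nat \<times> nat \<Rightarrow> 'a) set" where K': "linear_variety (idx (n - 1) (k - 1)) K'"
    "codim (idx (n - 1) (k - 1)) K' \<le> card (Bstar - ?Row)" "\<forall>X'\<in>K'. cullis_det (n - 1) (k - 1) X' = 0"
    using reduce_along_unit_column[OF V B i' j' col] unfolding Bstar by blast
  have finBstar: "finite Bstar" unfolding Bstar using finE by simp
  then have "card (Bstar - ?Row) = card Bstar - l"
    using card_Diff_subset_Int[of Bstar ?Row] assms(10) by simp
  moreover have "l \<le> card Bstar"
    using card_mono[OF finBstar Int_lower1[of Bstar ?Row]] assms(10) by simp
  ultimately show ?thesis using K' codim by (intro exI[of _ K']) auto
qed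

end
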